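(* Let $q:\mathsf D\to\mathbb R$ have sensitivity $\Delta q\in(0,\infty)$, and let $\mu\in\mathbb R$, $\sigma>0$, $0\le a<b\le\infty$. If $\Lambda$ has the Gaussian $\mathcal N(\mu,\sigma^2)$ distribution truncated to $[a,b]$, then the Randomized DP Laplace mechanism with reciprocal scale $\Lambda$ satisfies $\epsilon_{N^T}$-differential privacy, where $$\epsilon_{N^T}=\ln\left[\frac{\mu+\dfrac{\sigma(\phi(\alpha)-\phi(\beta))}{\Phi(\beta)-\Phi(\alpha)}}{M'_{\Lambda}(-\Delta q)}\right],\qquad \alpha=\frac{a-\mu}{\sigma},\ \beta=\frac{b-\mu}{\sigma},$$ $\phi$ and $\Phi$ being the standard normal density and distribution function, and $M'_\Lambda(-\Delta q)=\frac{dM_\Lambda(t)}{dt}\big|_{t=-\Delta q}$.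
   Context: Databases form a set $\mathsf D$ with a symmetric adjacency relation; the sensitivity of $q$ is $\Delta q=\sup\{|q(d)-q(d')|:d,d'\text{ adjacent}\}$. A mechanism $M$ is $\epsilon$-DP if $\mathbb P(M(d)\in S)\le e^\epsilon\mathbb P(M(d')\in S)$ for all adjacent $d,d'$ and Borel $S$. The truncated Gaussian on $[a,b]$ has density $\frac{\phi((x-\mu)/\sigma)}{\sigma(\Phi(\beta)-\Phi(\alpha))}$ for $a\le x\le b$ and $0$ otherwise. The Randomized DP Laplace mechanism with reciprocal-scale distribution $\Lambda$ (a random variable with values in $[0,\infty)$, positive a.s., playing the role of $1/b$ for the Laplace scale) is defined by $\mathcal M_q(d)=q(d)+W$, where conditionally on $\Lambda=\lambda$ the noise $W$ is Laplace with mean $0$ and scale $1/\lambda$, i.e. has density $\frac{\lambda}{2}e^{-\lambda|w|}$; the pair $(\Lambda,W)$ is drawn independently of $d$. $M_\Lambda(t)=\mathbb E[e^{t\Lambda}]$. *)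

theory Defs
  imports "HOL-Probability.Probability"
begin

text \<open>Standard normal distribution function, evaluated on extended reals
  (so that \<open>Phi \<infinity> = 1\<close> covers the case b = \<infinity>).\<close>
definition Phi :: "ereal \<Rightarrow> real" where
  "Phi x = measure (density lborel (\<lambda>y. ennreal (std_normal_density y))) {y. ereal y \<le> x}"

fun phi :: "ereal \<Rightarrow> real" where
  "phi (ereal x) = std_normal_density x"
| "phi _ = 0"

definition trunc_gauss_density :: "real \<Rightarrow> real \<Rightarrow> real \<Rightarrow> ereal \<Rightarrow> real \<Rightarrow> real" where
  "trunc_gauss_density mu sg a b x =
     (if a \<le> x \<and> ereal x \<le> b then
        std_normal_density ((x - mu) / sg) /
          (sg * (Phi ((b - ereal mu) / ereal sg) - Phi (ereal ((a - mu) / sg))))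
      else 0)"

definition trunc_gauss :: "real \<Rightarrow> real \<Rightarrow> real \<Rightarrow> ereal \<Rightarrow> real measure" where
  "trunc_gauss mu sg a b = density lborel (\<lambda>x. ennreal (trunc_gauss_density mu sg a b x))"

definition sensitivity :: "('d \<Rightarrow> 'd \<Rightarrow> bool) \<Rightarrow> ('d \<Rightarrow> real) \<Rightarrow> ereal" where
  "sensitivity adj q = Sup {ereal \<bar>q d - q d'\<bar> | d d'. adj d d'}"

definition differentially_private ::
  "('d \<Rightarrow> 'd \<Rightarrow> bool) \<Rightarrow> ('d \<Rightarrow> real measure) \<Rightarrow> real \<Rightarrow> bool" where
  "differentially_private adj M eps \<longleftrightarrow>
     (\<forall>d d'. adj d d' \<longrightarrow> (\<forall>S \<in> sets borel. measure (M d) S \<le> exp eps * measure (M d') S))"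

definition laplace_density :: "real \<Rightarrow> real \<Rightarrow> real" where
  "laplace_density l w = l / 2 * exp (- l * \<bar>w\<bar>)"

definition rand_laplace_mech :: "real measure \<Rightarrow> ('d \<Rightarrow> real) \<Rightarrow> 'd \<Rightarrow> real measure" where
  "rand_laplace_mech Lam q d =
     bind Lam (\<lambda>l. distr (density lborel (\<lambda>w. ennreal (laplace_density l w))) borel (\<lambda>w. q d + w))"

definition mgf :: "real measure \<Rightarrow> real \<Rightarrow> real" where
  "mgf Lam t = (\<integral>x. exp (t * x) \<partial>Lam)"

end

theory Submission
  imports Defs "HOL-Real_Asymp.Real_Asymp"
begin

text \<open>Given \<open>\<Lambda> = l\<close> the output \<open>q(d) + W\<close> has density \<open>(l/2) e\<^sup>-\<^sup>l\<^sup>\<bar>\<^sup>x\<^sup>-\<^sup>q\<^sup>(\<^sup>d\<^sup>)\<^sup>\<bar>\<close>,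
  so unconditionally it has density \<open>G(\<bar>x - q(d)\<bar>)/2\<close> with \<open>G(s) = E[\<Lambda> e\<^sup>-\<^sup>s\<^sup>\<Lambda>] = M'\<^sub>\<Lambda>(-s)\<close>.
  \<open>G\<close> is decreasing, and \<open>G(s) G(t) \<le> G(0) G(s + t)\<close> by Chebyshev's association inequality.
  Since \<open>\<bar>x - q(d')\<bar> \<le> \<bar>x - q(d)\<bar> + \<Delta>q\<close>, these two facts give the pointwise density bound
  \<open>G(\<bar>x - q(d)\<bar>) \<le> G(0)/G(\<Delta>q) \<cdot> G(\<bar>x - q(d')\<bar>)\<close>, i.e. privacy with \<open>\<epsilon> = ln (E[\<Lambda>] / M'\<^sub>\<Lambda>(-\<Delta>q))\<close>
  for every positive integrable \<open>\<Lambda>\<close>. The truncated Gaussian is positive because \<open>a \<ge> 0\<close>, and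
  substituting \<open>\<lambda> = \<mu> + \<sigma> u\<close> and integrating \<open>u \<phi>(u) = -\<phi>'(u)\<close> gives its mean
  \<open>E[\<Lambda>] = \<mu> + \<sigma> (\<phi>(\<alpha>) - \<phi>(\<beta>)) / (\<Phi>(\<beta>) - \<Phi>(\<alpha>))\<close>.\<close>

section \<open>Taylor remainder bounds\<close>

lemma has_real_derivative_quadratic_remainder:
  fixes f :: "real \<Rightarrow> real"
  assumes c: "0 < c" and remainder: "\<And>h. \<bar>h\<bar> \<le> c \<Longrightarrow> \<bar>f (x + h) - f x - h * D\<bar> \<le> K * h\<^sup>2"
  shows "(f has_real_derivative D) (at x)"
proof -
  have "\<forall>\<^sub>F h in at 0. norm ((f (x + h) - f x) / h - D) \<le> K * \<bar>h\<bar>"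
    unfolding eventually_at
  proof (intro exI[of _ c] conjI ballI impI)
    fix h :: real
    assume "h \<noteq> 0 \<and> dist h 0 < c"
    then have h: "h \<noteq> 0" "\<bar>h\<bar> \<le> c" by auto
    have "norm ((f (x + h) - f x) / h - D) = \<bar>f (x + h) - f x - h * D\<bar> / \<bar>h\<bar>"
      using h by (simp add: field_simps)
    also have "\<dots> \<le> K * h\<^sup>2 / \<bar>h\<bar>"
      using remainder[OF h(2)] by (simp add: divide_right_mono)
    also have "\<dots> = K * \<bar>h\<bar>"
      using h(1) by (simp add: power2_eq_square divide_simps mult.assoc)
    finally show "norm ((f (x + h) - f x) / h - D) \<le> K * \<bar>h\<bar>" .
  qed (use c in simp)
  moreover have "((\<lambda>h. K * \<bar>h\<bar>) \<longlongrightarrow> 0) (at (0::real))"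
    by (auto intro!: tendsto_eq_intros)
  ultimately have "((\<lambda>h. (f (x + h) - f x) / h - D) \<longlongrightarrow> 0) (at 0)"
    by (rule Lim_null_comparison)
  then show ?thesis
    unfolding DERIV_def by (simp add: LIM_zero_iff)
qed

lemma abs_exp_minus_one_minus_le:
  fixes u :: real
  shows "\<bar>exp u - 1 - u\<bar> \<le> exp \<bar>u\<bar> * u\<^sup>2 / 2"
proof -
  obtain t where t: "\<bar>t\<bar> \<le> \<bar>u\<bar>" "exp u = (\<Sum>m<2. u ^ m / fact m) + exp t / fact 2 * u ^ 2"
    using Maclaurin_exp_le[of u 2] by blast
  then have "exp u - 1 - u = exp t * u\<^sup>2 / 2"
    by (simp add: numeral_2_eq_2)
  moreover have "0 \<le> exp u - 1 - u"
    using exp_ge_add_one_self[of u] by linarith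
  ultimately have "\<bar>exp u - 1 - u\<bar> = exp t * u\<^sup>2 / 2"
    by simp
  also have "\<dots> \<le> exp \<bar>u\<bar> * u\<^sup>2 / 2"
    using t(1) by (intro divide_right_mono mult_right_mono) auto
  finally show ?thesis .
qed

lemma square_mult_exp_neg_le:
  fixes c x :: real
  assumes "0 < c" "0 \<le> x"
  shows "x\<^sup>2 * exp (- c * x) \<le> 4 / c\<^sup>2"
proof -
  have "x \<le> 2 / c * exp (c * x / 2)"
    using exp_gt_self[of "c * x / 2"] assms by (simp add: field_simps)
  then have "x\<^sup>2 \<le> (2 / c * exp (c * x / 2))\<^sup>2"
    using assms by (intro power_mono) auto
  also have "\<dots> = 4 / c\<^sup>2 * exp (c * x)"
    by (simp add: power2_eq_square field_simps exp_add[symmetric])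
  finally have "x\<^sup>2 * exp (- c * x) \<le> 4 / c\<^sup>2 * exp (c * x) * exp (- c * x)"
    by (intro mult_right_mono) auto
  then show ?thesis
    by (simp add: exp_minus field_simps)
qed

text \<open>The bound is uniform in \<open>x \<ge> 0\<close> because \<open>t0 + \<bar>h\<bar> \<le> -c < 0\<close> damps the factor \<open>x\<^sup>2\<close>.\<close>
lemma abs_exp_mult_remainder_le:
  fixes c x h t0 :: real
  assumes c: "0 < c" and x: "0 \<le> x" and h: "\<bar>h\<bar> \<le> c" and t0: "t0 + c \<le> - c"
  shows "\<bar>exp ((t0 + h) * x) - exp (t0 * x) - h * (x * exp (t0 * x))\<bar> \<le> 2 / c\<^sup>2 * h\<^sup>2"
proof -
  have "\<bar>exp ((t0 + h) * x) - exp (t0 * x) - h * (x * exp (t0 * x))\<bar>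
      = \<bar>exp (t0 * x) * (exp (h * x) - 1 - h * x)\<bar>"
    by (simp add: algebra_simps exp_add)
  also have "\<dots> = exp (t0 * x) * \<bar>exp (h * x) - 1 - h * x\<bar>"
    by (simp add: abs_mult)
  also have "\<dots> \<le> exp (t0 * x) * (exp \<bar>h * x\<bar> * (h * x)\<^sup>2 / 2)"
    by (intro mult_left_mono abs_exp_minus_one_minus_le) simp
  also have "\<dots> = h\<^sup>2 / 2 * (x\<^sup>2 * exp ((t0 + \<bar>h\<bar>) * x))"
    using x by (simp add: abs_mult exp_add[symmetric] algebra_simps power_mult_distrib)
  also have "\<dots> \<le> h\<^sup>2 / 2 * (x\<^sup>2 * exp (- c * x))"
  proof -
    have "(t0 + \<bar>h\<bar>) * x \<le> - c * x"
      using x h t0 by (intro mult_right_mono) auto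
    then show ?thesis by (intro mult_left_mono) auto
  qed
  also have "\<dots> \<le> h\<^sup>2 / 2 * (4 / c\<^sup>2)"
    by (intro mult_left_mono square_mult_exp_neg_le c x) simp
  finally show ?thesis
    by (simp add: field_simps)
qed

section \<open>The Laplace noise kernel\<close>

lemma laplace_density_measurable [measurable]: "laplace_density l \<in> borel_measurable borel"
  unfolding laplace_density_def by measurable

lemma nn_integral_laplace_density:
  assumes l: "0 < l"
  shows "(\<integral>\<^sup>+w. ennreal (laplace_density l w) \<partial>lborel) = 1"
proof -
  let ?E = "\<lambda>w. ennreal (exponential_density l w)"
  have E: "(\<integral>\<^sup>+w. ?E w \<partial>lborel) = 1"
  proof -
    interpret prob_space "density lborel (exponential_density l)"
      using prob_space_exponential_density[OF l] .
    show ?thesis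
      using emeasure_space_1 by (simp add: emeasure_density)
  qed
  moreover have "(\<integral>\<^sup>+w. ?E (- w) \<partial>lborel) = 1"
    using nn_integral_real_affine[of ?E "-1" 0] E by simp
  moreover have "AE w in lborel. ennreal (laplace_density l w) = (?E w + ?E (- w)) / 2"
    using AE_lborel_singleton[of 0]
  proof eventually_elim
    case (elim w)
    with l have eq: "laplace_density l w = (exponential_density l w + exponential_density l (- w)) / 2"
      unfolding laplace_density_def exponential_density_def by (auto simp: abs_if mult.commute)
    have "0 \<le> exponential_density l x" for x
      using l by (simp add: exponential_density_def)
    then show ?case
      by (simp add: eq ennreal_plus divide_ennreal[symmetric])
  qed
  ultimately have "(\<integral>\<^sup>+w. ennreal (laplace_density l w) \<partial>lborel) = (1 + 1) / 2"
    by (simp add: nn_integral_cong_AE nn_integral_divide nn_integral_add)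
  also have "\<dots> = 1"
    by (simp add: ennreal_divide_self)
  finally show ?thesis .
qed

lemma nn_integral_laplace_density_le_1: "(\<integral>\<^sup>+w. ennreal (laplace_density l w) \<partial>lborel) \<le> 1"
proof (cases "0 < l")
  case False
  then have "ennreal (laplace_density l w) = 0" for w
    unfolding laplace_density_def by (auto intro!: ennreal_neg mult_nonpos_nonneg)
  then show ?thesis by simp
qed (simp add: nn_integral_laplace_density)

text \<open>For \<open>l \<le> 0\<close> the density is clipped to \<open>0\<close> by \<open>ennreal\<close>, so this is the zero measure.\<close>
abbreviation laplace_shift :: "real \<Rightarrow> real \<Rightarrow> real measure" where
  "laplace_shift c l \<equiv> distr (density lborel (\<lambda>w. ennreal (laplace_density l w))) borel (\<lambda>w. c + w)"

lemma emeasure_laplace_shift: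
  assumes S: "S \<in> sets borel"
  shows "emeasure (laplace_shift c l) S
    = (\<integral>\<^sup>+x. ennreal (laplace_density l (x - c)) * indicator S x \<partial>lborel)"
proof -
  have "(\<lambda>w. c + w) -` S \<in> sets lborel"
    using measurable_sets[OF _ S, of "\<lambda>w. c + w" borel] by simp
  then have "emeasure (laplace_shift c l) S
      = (\<integral>\<^sup>+w. ennreal (laplace_density l w) * indicator S (c + w) \<partial>lborel)"
    using S by (subst emeasure_distr) (auto simp: emeasure_density indicator_def intro!: nn_integral_cong)
  also have "\<dots> = (\<integral>\<^sup>+x. ennreal (laplace_density l (x - c)) * indicator S x \<partial>lborel)"
    using nn_integral_real_affine[of "\<lambda>x. ennreal (laplace_density l (x - c)) * indicator S x" 1 c] S
    by simp
  finally show ?thesis .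
qed

lemma measurable_laplace_shift: "laplace_shift c \<in> borel \<rightarrow>\<^sub>M subprob_algebra borel"
proof (rule measurable_subprob_algebra)
  show "subprob_space (laplace_shift c l)" for l
  proof
    show "emeasure (laplace_shift c l) (space (laplace_shift c l)) \<le> 1"
      using nn_integral_laplace_density_le_1[of l] by (subst emeasure_distr) (auto simp: emeasure_density)
  qed simp
next
  fix A :: "real set"
  assume A: "A \<in> sets borel"
  have "(\<lambda>(l, x). ennreal (laplace_density l (x - c)) * indicator A x) \<in> borel_measurable (borel \<Otimes>\<^sub>M lborel)"
    using A unfolding laplace_density_def by measurable
  then have "(\<lambda>l. \<integral>\<^sup>+x. ennreal (laplace_density l (x - c)) * indicator A x \<partial>lborel) \<in> borel_measurable borel"
    by (rule sigma_finite_measure.borel_measurable_nn_integral[OF sigma_finite_lborel])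
  then show "(\<lambda>l. emeasure (laplace_shift c l) A) \<in> borel_measurable borel"
    by (simp add: emeasure_laplace_shift[OF A])
qed simp

section \<open>Laplace noise with a random positive reciprocal scale\<close>

locale reciprocal_scale = prob_space P for P :: "real measure" +
  assumes sets_eq_borel: "sets P = sets borel"
    and AE_pos: "AE l in P. 0 < l"
    and integrable_id: "integrable P (\<lambda>l. l)"
begin

lemma measurable_eq_borel: "measurable P M = measurable borel M"
  using measurable_cong_sets[OF sets_eq_borel refl] .

lemma AE_nonneg: "AE l in P. 0 \<le> l"
  using AE_pos by eventually_elim simp

text \<open>\<open>tilted_mean s = M'\<^sub>\<Lambda>(-s)\<close>; half of it is the density of the noise \<open>W\<close> at \<open>\<plusminus>s\<close>.\<close>
definition tilted_mean :: "real \<Rightarrow> real" where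
  "tilted_mean s = (\<integral>l. l * exp (- s * l) \<partial>P)"

lemma tilted_mean_0: "tilted_mean 0 = (\<integral>l. l \<partial>P)"
  by (simp add: tilted_mean_def)

lemma integrable_tilted:
  assumes "0 \<le> s"
  shows "integrable P (\<lambda>l. l * exp (- s * l))"
proof (rule Bochner_Integration.integrable_bound[OF integrable_id])
  show "(\<lambda>l. l * exp (- s * l)) \<in> borel_measurable P"
    unfolding measurable_eq_borel by simp
  show "AE l in P. norm (l * exp (- s * l)) \<le> norm l"
    using AE_nonneg
  proof eventually_elim
    case (elim l)
    with assms have "exp (- s * l) \<le> 1" by simp
    with elim show ?case by (simp add: abs_mult mult_left_le)
  qed
qed

lemma tilted_mean_antimono:
  assumes "0 \<le> s" "s \<le> t"
  shows "tilted_mean t \<le> tilted_mean s"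
  unfolding tilted_mean_def
proof (rule integral_mono_AE)
  show "AE l in P. l * exp (- t * l) \<le> l * exp (- s * l)"
    using AE_nonneg by eventually_elim (use assms in \<open>auto intro!: mult_left_mono mult_right_mono\<close>)
qed (use assms integrable_tilted in auto)

lemma tilted_mean_pos:
  assumes "0 \<le> s"
  shows "0 < tilted_mean s"
proof -
  have nonneg: "AE l in P. 0 \<le> l * exp (- s * l)"
    using AE_nonneg by eventually_elim simp
  have "tilted_mean s \<noteq> 0"
  proof
    assume "tilted_mean s = 0"
    then have "AE l in P. l * exp (- s * l) = 0"
      using integral_nonneg_eq_0_iff_AE[OF integrable_tilted[OF assms] nonneg]
      by (simp add: tilted_mean_def)
    with AE_pos have "AE l in P. False" by eventually_elim simp
    then show False by simp
  qed
  moreover have "0 \<le> tilted_mean s"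
    unfolding tilted_mean_def using nonneg by (rule integral_nonneg_AE)
  ultimately show ?thesis by simp
qed

text \<open>Chebyshev's association inequality for the two decreasing functions \<open>e\<^sup>-\<^sup>s\<^sup>l\<close> and
  \<open>e\<^sup>-\<^sup>t\<^sup>l = (e\<^sup>-\<^sup>s\<^sup>l)\<^sup>t\<^sup>/\<^sup>s\<close> under the weight \<open>l dP\<close>: with \<open>m\<close> the weighted mean of \<open>e\<^sup>-\<^sup>s\<^sup>l\<close>,
  the factors of \<open>(e\<^sup>-\<^sup>s\<^sup>l - m) (e\<^sup>-\<^sup>t\<^sup>l - m\<^sup>t\<^sup>/\<^sup>s)\<close> always have the same sign.\<close>
lemma tilted_mean_mult_le:
  assumes s: "0 < s" and t: "0 \<le> t"
  shows "tilted_mean s * tilted_mean t \<le> tilted_mean 0 * tilted_mean (s + t)"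
proof -
  let ?G = tilted_mean
  define m where "m = ?G s / ?G 0"
  define c where "c = m powr (t / s)"
  have m: "0 \<le> m" "m * ?G 0 = ?G s"
    unfolding m_def using tilted_mean_pos[of 0] tilted_mean_pos[of s] s by auto
  have same_sign: "AE l in P. 0 \<le> l * ((exp (- s * l) - m) * (exp (- t * l) - c))"
    using AE_nonneg
  proof eventually_elim
    case (elim l)
    have e: "exp (- t * l) = exp (- s * l) powr (t / s)"
      using s by (simp add: powr_def)
    have "0 \<le> (exp (- s * l) - m) * (exp (- t * l) - c)"
    proof (cases "m \<le> exp (- s * l)")
      case True
      then have "c \<le> exp (- t * l)"
        unfolding e c_def using m(1) s t by (intro powr_mono2) auto
      with True show ?thesis by simp
    next
      case False
      then have "exp (- t * l) \<le> c"
        unfolding e c_def using m(1) s t by (intro powr_mono2) auto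
      with False show ?thesis by (simp add: mult_nonpos_nonpos)
    qed
    with elim show ?case by simp
  qed
  have "0 \<le> (\<integral>l. l * ((exp (- s * l) - m) * (exp (- t * l) - c)) \<partial>P)"
    using same_sign by (rule integral_nonneg_AE)
  also have "\<dots> = ?G (s + t) - c * ?G s - m * ?G t + m * c * ?G 0"
  proof -
    have "l * ((exp (- s * l) - m) * (exp (- t * l) - c)) =
      l * exp (- (s + t) * l) - c * (l * exp (- s * l)) - m * (l * exp (- t * l))
        + m * c * (l * exp (- 0 * l))" for l
      by (simp add: algebra_simps exp_add[symmetric])
    then show ?thesis
      using integrable_tilted[of "s + t"] integrable_tilted[of s] integrable_tilted[of t]
        integrable_tilted[of 0] s t
      by (simp add: tilted_mean_def)
  qed
  finally have "m * ?G t \<le> ?G (s + t)"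
    using m(2) by (simp add: algebra_simps)
  then show ?thesis
    unfolding m_def using tilted_mean_pos[of 0] by (simp add: field_simps)
qed

lemma tilted_mean_le_shift:
  assumes D: "0 < D" and r: "0 \<le> r" and r': "0 \<le> r'" "r' \<le> r + D"
  shows "tilted_mean r \<le> tilted_mean 0 / tilted_mean D * tilted_mean r'"
proof -
  let ?G = tilted_mean
  have "?G r * ?G D \<le> ?G 0 * ?G r'"
  proof (cases "r' \<le> D")
    case True
    then show ?thesis
      using tilted_mean_antimono[of 0 r] tilted_mean_antimono[of r' D] r r' D
        tilted_mean_pos[of D] tilted_mean_pos[of 0]
      by (intro mult_mono) auto
  next
    case False
    then have "0 < r' - D" "r' - D \<le> r" using r' by auto
    then have "?G r * ?G D \<le> ?G (r' - D) * ?G D"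
      using tilted_mean_antimono tilted_mean_pos[of D] D by (intro mult_right_mono) auto
    also have "\<dots> \<le> ?G 0 * ?G r'"
      using tilted_mean_mult_le[of "r' - D" D] \<open>0 < r' - D\<close> D by simp
    finally show ?thesis .
  qed
  then show ?thesis
    using tilted_mean_pos[of D] D by (simp add: field_simps)
qed

lemma integrable_exp_mult:
  assumes "t \<le> 0"
  shows "integrable P (\<lambda>l. exp (t * l))"
proof (rule Bochner_Integration.integrable_bound[OF integrable_const[of 1]])
  show "(\<lambda>l. exp (t * l)) \<in> borel_measurable P"
    unfolding measurable_eq_borel by simp
  show "AE l in P. norm (exp (t * l)) \<le> norm (1::real)"
    using AE_nonneg by eventually_elim (use assms in \<open>simp add: mult_nonpos_nonneg\<close>)
qed

lemma mgf_has_real_derivative: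
  assumes t: "t < 0"
  shows "(mgf P has_real_derivative tilted_mean (- t)) (at t)"
proof (rule has_real_derivative_quadratic_remainder)
  define c where "c = - t / 2"
  show c: "0 < c" using t by (simp add: c_def)
  have tc: "t + c \<le> - c" by (simp add: c_def)
  fix h :: real
  assume h: "\<bar>h\<bar> \<le> c"
  let ?r = "\<lambda>l. exp ((t + h) * l) - exp (t * l) - h * (l * exp (t * l))"
  have "integrable P (\<lambda>l. exp ((t + h) * l))" "integrable P (\<lambda>l. exp (t * l))"
    using integrable_exp_mult[of "t + h"] integrable_exp_mult[of t] h t by (auto simp: c_def)
  moreover have "integrable P (\<lambda>l. l * exp (t * l))"
    using integrable_tilted[of "- t"] t by simp
  ultimately have "mgf P (t + h) - mgf P t - h * tilted_mean (- t) = (\<integral>l. ?r l \<partial>P)"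
    "integrable P ?r"
    by (simp_all add: mgf_def tilted_mean_def)
  then have "\<bar>mgf P (t + h) - mgf P t - h * tilted_mean (- t)\<bar> \<le> (\<integral>l. \<bar>?r l\<bar> \<partial>P)"
    using integral_norm_bound[of P ?r] by simp
  also have "\<dots> \<le> 2 / c\<^sup>2 * h\<^sup>2"
  proof (rule integral_le_const)
    show "AE l in P. \<bar>?r l\<bar> \<le> 2 / c\<^sup>2 * h\<^sup>2"
      using AE_nonneg by eventually_elim (rule abs_exp_mult_remainder_le[OF c _ h tc])
  qed (use \<open>integrable P ?r\<close> in simp)
  finally show "\<bar>mgf P (t + h) - mgf P t - h * tilted_mean (- t)\<bar> \<le> 2 / c\<^sup>2 * h\<^sup>2" .
qed

lemma nn_integral_laplace_density_mixture:
  "(\<integral>\<^sup>+l. ennreal (laplace_density l w) \<partial>P) = ennreal (tilted_mean \<bar>w\<bar> / 2)"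
proof -
  have "(\<integral>\<^sup>+l. ennreal (laplace_density l w) \<partial>P) = (\<integral>\<^sup>+l. ennreal (l * exp (- \<bar>w\<bar> * l) / 2) \<partial>P)"
    by (simp add: laplace_density_def mult.commute)
  also have "\<dots> = ennreal (\<integral>l. l * exp (- \<bar>w\<bar> * l) / 2 \<partial>P)"
    using integrable_tilted[of "\<bar>w\<bar>"] AE_nonneg
    by (intro nn_integral_eq_integral) (auto elim!: eventually_mono)
  finally show ?thesis
    by (simp add: tilted_mean_def)
qed

lemma borel_measurable_tilted_mean_abs [measurable]:
  "(\<lambda>x. ennreal (tilted_mean \<bar>x - c\<bar> / 2)) \<in> borel_measurable borel"
proof -
  have "(\<lambda>(x, l). ennreal (laplace_density l (x - c))) \<in> borel_measurable (borel \<Otimes>\<^sub>M P)"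
    unfolding measurable_cong_sets[OF sets_pair_measure_cong[OF refl sets_eq_borel] refl]
    unfolding laplace_density_def by measurable
  then show ?thesis
    unfolding nn_integral_laplace_density_mixture[symmetric] by (rule borel_measurable_nn_integral)
qed

lemma emeasure_rand_laplace_mech:
  assumes S: "S \<in> sets borel"
  shows "emeasure (rand_laplace_mech P q d) S
    = (\<integral>\<^sup>+x. ennreal (tilted_mean \<bar>x - q d\<bar> / 2) * indicator S x \<partial>lborel)"
proof -
  interpret pair_sigma_finite P lborel
    by (simp add: pair_sigma_finite_def sigma_finite_measure_axioms sigma_finite_lborel)
  have "(\<lambda>(l, x). ennreal (laplace_density l (x - q d)) * indicator S x) \<in> borel_measurable (P \<Otimes>\<^sub>M lborel)"
    using S unfolding measurable_cong_sets[OF sets_pair_measure_cong[OF sets_eq_borel refl] refl]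
    unfolding laplace_density_def by measurable
  note Fubini = Fubini'[OF this]
  have "emeasure (rand_laplace_mech P q d) S = (\<integral>\<^sup>+l. emeasure (laplace_shift (q d) l) S \<partial>P)"
    unfolding rand_laplace_mech_def
    using measurable_laplace_shift unfolding measurable_eq_borel[symmetric]
    by (rule emeasure_bind[OF not_empty _ S])
  also have "\<dots> = (\<integral>\<^sup>+x. \<integral>\<^sup>+l. ennreal (laplace_density l (x - q d)) * indicator S x \<partial>P \<partial>lborel)"
    by (simp add: emeasure_laplace_shift[OF S] Fubini)
  also have "\<dots> = (\<integral>\<^sup>+x. (\<integral>\<^sup>+l. ennreal (laplace_density l (x - q d)) \<partial>P) * indicator S x \<partial>lborel)"
  proof (intro nn_integral_cong nn_integral_multc)
    show "(\<lambda>l. ennreal (laplace_density l (x - q d))) \<in> borel_measurable P" for x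
      unfolding measurable_eq_borel laplace_density_def by measurable
  qed
  also have "\<dots> = (\<integral>\<^sup>+x. ennreal (tilted_mean \<bar>x - q d\<bar> / 2) * indicator S x \<partial>lborel)"
    by (simp add: nn_integral_laplace_density_mixture)
  finally show ?thesis .
qed

lemma subprob_space_rand_laplace_mech: "subprob_space (rand_laplace_mech P q d)"
  unfolding rand_laplace_mech_def
  using measurable_laplace_shift unfolding measurable_eq_borel[symmetric]
  by (rule subprob_space_bind[OF subprob_space_axioms])

lemma tilted_mean_abs_diff_le:
  assumes D: "0 < D" and cc': "\<bar>c - c'\<bar> \<le> D"
  shows "tilted_mean \<bar>x - c\<bar> \<le> tilted_mean 0 / tilted_mean D * tilted_mean \<bar>x - c'\<bar>"
proof -
  have "\<bar>x - c'\<bar> \<le> \<bar>x - c\<bar> + D"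
    using cc' by linarith
  then show ?thesis
    using tilted_mean_le_shift[OF D] by simp
qed

lemma emeasure_rand_laplace_mech_le:
  assumes D: "0 < D" "\<bar>q d - q d'\<bar> \<le> D" and S: "S \<in> sets borel"
  shows "emeasure (rand_laplace_mech P q d) S
    \<le> ennreal (tilted_mean 0 / tilted_mean D) * emeasure (rand_laplace_mech P q d') S"
proof -
  let ?E = "tilted_mean 0 / tilted_mean D"
  have "ennreal (tilted_mean \<bar>x - q d\<bar> / 2) \<le> ennreal ?E * ennreal (tilted_mean \<bar>x - q d'\<bar> / 2)" for x
    using tilted_mean_abs_diff_le[OF D, of x] tilted_mean_pos[of 0] tilted_mean_pos[of D]
      tilted_mean_pos[of "\<bar>x - q d'\<bar>"] D
    by (simp add: ennreal_mult[symmetric] ennreal_leI)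
  then have "emeasure (rand_laplace_mech P q d) S
      \<le> (\<integral>\<^sup>+x. ennreal ?E * (ennreal (tilted_mean \<bar>x - q d'\<bar> / 2) * indicator S x) \<partial>lborel)"
    unfolding emeasure_rand_laplace_mech[OF S] by (intro nn_integral_mono) (simp add: indicator_def)
  also have "\<dots> = ennreal ?E * emeasure (rand_laplace_mech P q d') S"
    unfolding emeasure_rand_laplace_mech[OF S] using S
    by (intro nn_integral_cmult borel_measurable_times_ennreal borel_measurable_indicator)
      (simp_all add: borel_measurable_tilted_mean_abs)
  finally show ?thesis .
qed

theorem differentially_private_rand_laplace_mech:
  assumes D: "0 < D" and sens: "\<And>d d'. adj d d' \<Longrightarrow> \<bar>q d - q d'\<bar> \<le> D"
  shows "differentially_private adj (rand_laplace_mech P q) (ln (tilted_mean 0 / tilted_mean D))"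
  unfolding differentially_private_def
proof (intro allI impI ballI)
  fix d d' and S :: "real set"
  assume adj: "adj d d'" and S: "S \<in> sets borel"
  let ?E = "tilted_mean 0 / tilted_mean D"
  have E: "0 < ?E"
    using tilted_mean_pos[of 0] tilted_mean_pos[of D] D by simp
  have "emeasure (rand_laplace_mech P q d') S < \<infinity>"
    using subprob_space.subprob_emeasure_le_1[OF subprob_space_rand_laplace_mech[of q d'], of S]
    by (simp add: order_le_less_trans)
  then have "measure (rand_laplace_mech P q d) S \<le> enn2real (ennreal ?E * emeasure (rand_laplace_mech P q d') S)"
    using emeasure_rand_laplace_mech_le[of D q d d', OF D sens[OF adj] S]
    unfolding measure_def by (intro enn2real_mono) (simp_all add: ennreal_mult_less_top)
  then show "measure (rand_laplace_mech P q d) S \<le> exp (ln ?E) * measure (rand_laplace_mech P q d') S"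
    using E by (simp add: measure_def enn2real_mult)
qed

end

section \<open>The standard normal distribution\<close>

lemma AE_lborel_ereal_neq: "AE x in lborel. ereal x \<noteq> b"
  by (cases b) (simp_all add: AE_lborel_singleton)

lemma std_normal_density_has_real_derivative:
  "(std_normal_density has_real_derivative - u * std_normal_density u) (at u)"
proof -
  have "((\<lambda>u. exp (- u\<^sup>2 / 2)) has_real_derivative exp (- u\<^sup>2 / 2) * (- u)) (at u)"
    by (auto intro!: derivative_eq_intros)
  from DERIV_cmult[OF this, of "1 / sqrt (2 * pi)"] show ?thesis
    unfolding std_normal_density_def by (simp add: algebra_simps)
qed

lemma std_normal_density_at_top: "(std_normal_density \<longlongrightarrow> 0) at_top"
  unfolding std_normal_density_def by real_asymp

lemma interval_integral_eq_integral_indicator: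
  fixes f :: "real \<Rightarrow> real"
  shows "a \<le> b \<Longrightarrow> (LBINT u=a..b. f u) = (\<integral>u. indicator (einterval a b) u * f u \<partial>lborel)"
  by (simp add: interval_lebesgue_integral_def set_lebesgue_integral_def)

lemma measure_density_eq_integral:
  fixes f :: "'a \<Rightarrow> real"
  assumes f: "integrable M f" "\<And>x. 0 \<le> f x" and A: "A \<in> sets M"
  shows "measure (density M (\<lambda>x. ennreal (f x))) A = (\<integral>x. indicator A x * f x \<partial>M)"
proof -
  have int: "integrable M (\<lambda>x. indicator A x * f x)"
    using integrable_mult_indicator[OF A f(1)] by simp
  have "emeasure (density M (\<lambda>x. ennreal (f x))) A = (\<integral>\<^sup>+x. ennreal (indicator A x * f x) \<partial>M)"
    using A f by (auto simp: emeasure_density borel_measurable_integrable intro!: nn_integral_cong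
      split: split_indicator)
  also have "\<dots> = ennreal (\<integral>x. indicator A x * f x \<partial>M)"
    using int f(2) by (intro nn_integral_eq_integral) auto
  finally show ?thesis
    using int f(2) by (simp add: measure_def)
qed

lemma Phi_diff_eq_interval_integral:
  assumes xy: "ereal x < y"
  shows "Phi y - Phi (ereal x) = (LBINT u=ereal x..y. std_normal_density u)"
proof -
  interpret N: prob_space "density lborel (\<lambda>u. ennreal (std_normal_density u))"
    using prob_space_normal_density[of 1 0] by simp
  have subset: "{u. ereal u \<le> ereal x} \<subseteq> {u. ereal u \<le> y}"
    using xy by (auto intro: order_trans[OF _ less_imp_le[OF xy]])
  have "Phi y - Phi (ereal x)
      = N.prob ({u. ereal u \<le> y} - {u. ereal u \<le> ereal x})"
    unfolding Phi_def by (rule N.finite_measure_Diff[symmetric]) (use subset in auto)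
  also have "\<dots> = (\<integral>u. indicator ({u. ereal u \<le> y} - {u. ereal u \<le> ereal x}) u * std_normal_density u \<partial>lborel)"
    using integrable_normal_density[of 1 0] by (intro measure_density_eq_integral) auto
  also have "\<dots> = (\<integral>u. indicator (einterval (ereal x) y) u * std_normal_density u \<partial>lborel)"
    using AE_lborel_ereal_neq[of y]
    by (intro integral_cong_AE) (auto simp: einterval_def indicator_def elim!: eventually_mono)
  finally show ?thesis
    using xy by (simp add: interval_integral_eq_integral_indicator)
qed

lemma Phi_diff_pos:
  assumes xy: "ereal x < y"
  shows "0 < Phi y - Phi (ereal x)"
proof -
  obtain c where c: "x < c" "ereal c < y"
    using ereal_dense2[OF xy] by (metis ereal_less(2) less_ereal.simps(1))
  let ?f = "\<lambda>u. indicator (einterval (ereal x) y) u * std_normal_density u"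
  have nonneg: "AE u in lborel. 0 \<le> ?f u"
    by simp
  have nonzero: "std_normal_density u \<noteq> 0" for u
    using normal_density_pos[of 1 0 u] by simp
  have int: "integrable lborel ?f"
    using integrable_mult_indicator[of "einterval (ereal x) y" lborel std_normal_density] by simp
  have Phi_diff: "Phi y - Phi (ereal x) = (\<integral>u. ?f u \<partial>lborel)"
    using xy by (simp add: Phi_diff_eq_interval_integral interval_integral_eq_integral_indicator)
  have "(\<integral>u. ?f u \<partial>lborel) \<noteq> 0"
  proof
    assume "(\<integral>u. ?f u \<partial>lborel) = 0"
    then have "AE u in lborel. ?f u = 0"
      using integral_nonneg_eq_0_iff_AE[OF int nonneg] by simp
    then have "AE u in lborel. u \<notin> {x<..<c}"
      by eventually_elim
        (use c nonzero in \<open>auto simp: einterval_def indicator_def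
          intro: less_trans[of _ "ereal c" y] split: if_splits\<close>)
    then have "emeasure lborel {x<..<c} = 0"
      by (subst (asm) AE_iff_measurable[of "{x<..<c}"]) auto
    with c show False by simp
  qed
  moreover have "0 \<le> (\<integral>u. ?f u \<partial>lborel)"
    using nonneg by (rule integral_nonneg_AE)
  ultimately show ?thesis
    unfolding Phi_diff by linarith
qed

lemma interval_integral_std_normal_moment_1:
  assumes xy: "ereal x < y"
  shows "(LBINT u=ereal x..y. u * std_normal_density u) = std_normal_density x - phi y"
proof -
  let ?f = "\<lambda>u. u * std_normal_density u"
  have cont: "(std_normal_density \<longlongrightarrow> std_normal_density v) (at v)" for v
    using DERIV_isCont[OF std_normal_density_has_real_derivative[of v]] unfolding isCont_def .
  have "(LBINT u=ereal x..y. ?f u) = - phi y - (- std_normal_density x)"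
  proof (rule interval_integral_FTC_integrable[where F="\<lambda>u. - std_normal_density u"])
    show "((\<lambda>u. - std_normal_density u) has_vector_derivative ?f u) (at u)" for u
      using std_normal_density_has_real_derivative[of u]
      by (auto simp: has_real_derivative_iff_has_vector_derivative[symmetric] intro!: derivative_eq_intros)
    show "isCont ?f u" for u
      using cont[of u] unfolding isCont_def by (intro tendsto_mult tendsto_ident_at)
    show "set_integrable lborel (einterval (ereal x) y) ?f"
      using integrable_std_normal_moment[of 1] unfolding set_integrable_def
      by (intro integrable_mult_indicator) (simp_all add: mult.commute)
    show "(((\<lambda>u. - std_normal_density u) \<circ> real_of_ereal) \<longlongrightarrow> - std_normal_density x) (at_right (ereal x))"
      unfolding ereal_tendsto_simps1 by (intro tendsto_minus tendsto_mono[OF at_le[OF subset_UNIV] cont])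
    show "(((\<lambda>u. - std_normal_density u) \<circ> real_of_ereal) \<longlongrightarrow> - phi y) (at_left y)"
    proof (cases y)
      case (real r)
      then show ?thesis
        unfolding real ereal_tendsto_simps1 phi.simps by (intro tendsto_minus tendsto_mono[OF at_le[OF subset_UNIV] cont])
    next
      case PInf
      have "phi \<infinity> = 0"
        using phi.simps(2) by (simp only: infinity_ereal_def)
      then show ?thesis
        unfolding PInf ereal_tendsto_simps1 using tendsto_minus[OF std_normal_density_at_top] by simp
    qed (use xy in simp)
  qed (use xy in simp)
  then show ?thesis by simp
qed

section \<open>The truncated Gaussian\<close>

locale truncated_gaussian =
  fixes mu sg a :: real and b :: ereal
  assumes sg_pos: "0 < sg" and a_less_b: "ereal a < b"
begin

abbreviation g :: "real \<Rightarrow> real" where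
  "g \<equiv> trunc_gauss_density mu sg a b"

definition alpha :: real where
  "alpha = (a - mu) / sg"

definition beta :: ereal where
  "beta = (b - ereal mu) / ereal sg"

definition normalizer :: real where
  "normalizer = Phi beta - Phi (ereal alpha)"

lemma ereal_affine_le_b_iff: "ereal (mu + sg * u) \<le> b \<longleftrightarrow> ereal u \<le> beta"
proof (cases b)
  case (real r)
  then show ?thesis
    unfolding beta_def using sg_pos by (simp add: field_simps)
next
  case PInf
  then show ?thesis
    unfolding beta_def using sg_pos by (simp add: ereal_divide_eq)
qed (use a_less_b in simp)

lemma alpha_less_beta: "ereal alpha < beta"
proof (cases b)
  case (real r)
  then show ?thesis
    unfolding alpha_def beta_def using a_less_b sg_pos by (simp add: divide_strict_right_mono)
next
  case PInf
  then show ?thesis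
    unfolding beta_def using sg_pos by (simp add: ereal_divide_eq)
qed (use a_less_b in simp)

lemma normalizer_pos: "0 < normalizer"
  unfolding normalizer_def using alpha_less_beta by (rule Phi_diff_pos)

lemma trunc_gauss_density_affine:
  assumes "u \<noteq> alpha" "ereal u \<noteq> beta"
  shows "g (mu + sg * u) = indicator (einterval alpha beta) u * std_normal_density u / (sg * normalizer)"
proof -
  have "a \<le> mu + sg * u \<longleftrightarrow> alpha \<le> u"
    using sg_pos by (simp add: alpha_def field_simps)
  then show ?thesis
    using assms sg_pos ereal_affine_le_b_iff[of u]
    by (auto simp: trunc_gauss_density_def normalizer_def alpha_def[symmetric] beta_def[symmetric]
        einterval_def indicator_def)
qed

lemma trunc_gauss_density_nonneg: "0 \<le> g x"
  using normalizer_pos sg_pos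
  by (simp add: trunc_gauss_density_def normalizer_def alpha_def beta_def)

lemma trunc_gauss_density_measurable [measurable]: "g \<in> borel_measurable borel"
  unfolding trunc_gauss_density_def by measurable

lemma AE_trunc_gauss_density_affine:
  "AE u in lborel. g (mu + sg * u) * k (mu + sg * u)
     = indicator (einterval alpha beta) u * (std_normal_density u * k (mu + sg * u)) / (sg * normalizer)"
  using AE_lborel_singleton[of alpha] AE_lborel_ereal_neq[of beta]
  by eventually_elim (simp add: trunc_gauss_density_affine)

lemma integral_trunc_gauss_density:
  assumes [measurable]: "k \<in> borel_measurable borel"
  shows "(\<integral>x. g x * k x \<partial>lborel)
    = (LBINT u=ereal alpha..beta. std_normal_density u * k (mu + sg * u)) / normalizer"
proof -
  have "(\<integral>x. g x * k x \<partial>lborel) = sg * (\<integral>u. g (mu + sg * u) * k (mu + sg * u) \<partial>lborel)"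
    using lborel_integral_real_affine[of sg "\<lambda>x. g x * k x" mu] sg_pos by simp
  also have "(\<integral>u. g (mu + sg * u) * k (mu + sg * u) \<partial>lborel)
      = (\<integral>u. indicator (einterval alpha beta) u * (std_normal_density u * k (mu + sg * u)) \<partial>lborel)
          / (sg * normalizer)"
    by (subst integral_cong_AE[OF _ _ AE_trunc_gauss_density_affine]) simp_all
  finally show ?thesis
    using sg_pos alpha_less_beta by (simp add: interval_integral_eq_integral_indicator)
qed

lemma integrable_trunc_gauss_density:
  assumes [measurable]: "k \<in> borel_measurable borel"
    and int: "integrable lborel (\<lambda>u. std_normal_density u * k (mu + sg * u))"
  shows "integrable lborel (\<lambda>x. g x * k x)"
proof -
  have "integrable lborel (\<lambda>u. indicator (einterval alpha beta) u * (std_normal_density u * k (mu + sg * u))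
      / (sg * normalizer))"
    using integrable_mult_indicator[OF _ int, of "einterval alpha beta"] by simp
  then have "integrable lborel (\<lambda>u. g (mu + sg * u) * k (mu + sg * u))"
    using integrable_cong_AE[OF _ _ AE_trunc_gauss_density_affine] by simp
  then show ?thesis
    using lborel_integrable_real_affine_iff[of sg "\<lambda>x. g x * k x" mu] sg_pos by simp
qed

lemma sets_trunc_gauss: "sets (trunc_gauss mu sg a b) = sets borel"
  by (simp add: trunc_gauss_def)

lemma prob_space_trunc_gauss: "prob_space (trunc_gauss mu sg a b)"
proof
  have "integrable lborel g"
    using integrable_trunc_gauss_density[of "\<lambda>_. 1"] integrable_normal_density[of 1 0] by simp
  then have "emeasure (trunc_gauss mu sg a b) UNIV = ennreal (\<integral>x. g x \<partial>lborel)"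
    unfolding trunc_gauss_def
    by (simp add: emeasure_density nn_integral_eq_integral trunc_gauss_density_nonneg)
  also have "(\<integral>x. g x \<partial>lborel) = 1"
    using integral_trunc_gauss_density[of "\<lambda>_. 1"] normalizer_pos alpha_less_beta
    by (simp add: normalizer_def Phi_diff_eq_interval_integral)
  finally show "emeasure (trunc_gauss mu sg a b) (space (trunc_gauss mu sg a b)) = 1"
    by (simp add: trunc_gauss_def)
qed

lemma integrable_trunc_gauss_id: "integrable (trunc_gauss mu sg a b) (\<lambda>l. l)"
proof -
  have "integrable lborel (\<lambda>u. mu * std_normal_density u + sg * (std_normal_density u * u ^ 1))"
    using integrable_normal_density[of 1 0] integrable_std_normal_moment[of 1] by simp
  then have "integrable lborel (\<lambda>x. g x * x)"
    by (intro integrable_trunc_gauss_density) (simp_all add: algebra_simps)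
  then show ?thesis
    unfolding trunc_gauss_def by (simp add: integrable_density trunc_gauss_density_nonneg)
qed

lemma mean_trunc_gauss:
  "(\<integral>l. l \<partial>trunc_gauss mu sg a b) = mu + sg * (std_normal_density alpha - phi beta) / normalizer"
proof -
  have "set_integrable lborel (einterval alpha beta) std_normal_density"
    using integrable_normal_density[of 1 0] unfolding set_integrable_def
    by (intro integrable_mult_indicator) simp_all
  moreover have "set_integrable lborel (einterval alpha beta) (\<lambda>u. u * std_normal_density u)"
    using integrable_std_normal_moment[of 1] unfolding set_integrable_def
    by (intro integrable_mult_indicator) (simp_all add: mult.commute)
  ultimately have int: "interval_lebesgue_integrable lborel alpha beta std_normal_density"
    "interval_lebesgue_integrable lborel alpha beta (\<lambda>u. u * std_normal_density u)"
    using alpha_less_beta by (simp_all add: interval_lebesgue_integrable_def less_imp_le)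
  have "(\<integral>l. l \<partial>trunc_gauss mu sg a b) = (\<integral>x. g x * x \<partial>lborel)"
    unfolding trunc_gauss_def by (simp add: integral_density trunc_gauss_density_nonneg)
  also have "\<dots> = (LBINT u=ereal alpha..beta. std_normal_density u * (mu + sg * u)) / normalizer"
    by (rule integral_trunc_gauss_density) simp
  also have "(\<lambda>u. std_normal_density u * (mu + sg * u))
      = (\<lambda>u. mu * std_normal_density u + sg * (u * std_normal_density u))"
    by (simp add: algebra_simps)
  also have "(LBINT u=ereal alpha..beta. mu * std_normal_density u + sg * (u * std_normal_density u))
      = mu * normalizer + sg * (std_normal_density alpha - phi beta)"
    using int alpha_less_beta
    by (simp add: interval_lebesgue_integral_add interval_lebesgue_integral_mult_right normalizer_def
        Phi_diff_eq_interval_integral interval_integral_std_normal_moment_1)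
  finally show ?thesis
    using normalizer_pos by (simp add: field_simps)
qed

lemma AE_trunc_gauss_pos:
  assumes "0 \<le> a"
  shows "AE l in trunc_gauss mu sg a b. 0 < l"
proof -
  have "AE x in lborel. 0 < g x \<longrightarrow> 0 < x"
    using AE_lborel_singleton[of 0]
    by eventually_elim (use assms in \<open>auto simp: trunc_gauss_density_def split: if_splits\<close>)
  then show ?thesis
    unfolding trunc_gauss_def by (simp add: AE_density)
qed

lemma reciprocal_scale_trunc_gauss:
  assumes "0 \<le> a"
  shows "reciprocal_scale (trunc_gauss mu sg a b)"
  using prob_space_trunc_gauss sets_trunc_gauss AE_trunc_gauss_pos[OF assms] integrable_trunc_gauss_id
  by (simp add: reciprocal_scale_def reciprocal_scale_axioms_def)

end

theorem mainTheorem13: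
  fixes adj :: "'d \<Rightarrow> 'd \<Rightarrow> bool" and q :: "'d \<Rightarrow> real"
    and mu sg a :: real and b :: ereal and \<Delta> :: real
  assumes "symp adj"
    and "sensitivity adj q = ereal \<Delta>" and "0 < \<Delta>"
    and "0 < sg" and "0 \<le> a" and "ereal a < b"
  shows "differentially_private adj (rand_laplace_mech (trunc_gauss mu sg a b) q)
           (ln ((mu + sg * (phi (ereal ((a - mu) / sg)) - phi ((b - ereal mu) / ereal sg)) /
                   (Phi ((b - ereal mu) / ereal sg) - Phi (ereal ((a - mu) / sg))))
                / deriv (mgf (trunc_gauss mu sg a b)) (- \<Delta>)))"
proof -
  interpret truncated_gaussian mu sg a b
    using assms(4,6) by unfold_locales
  interpret reciprocal_scale "trunc_gauss mu sg a b"
    using reciprocal_scale_trunc_gauss[OF assms(5)] .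
  have sens: "\<bar>q d - q d'\<bar> \<le> \<Delta>" if "adj d d'" for d d'
  proof -
    have "ereal \<bar>q d - q d'\<bar> \<le> sensitivity adj q"
      unfolding sensitivity_def using that by (intro Sup_upper) blast
    with assms(2) show ?thesis by simp
  qed
  have "deriv (mgf (trunc_gauss mu sg a b)) (- \<Delta>) = tilted_mean \<Delta>"
    using mgf_has_real_derivative[of "- \<Delta>"] assms(3) by (simp add: DERIV_imp_deriv)
  moreover have "mu + sg * (phi (ereal ((a - mu) / sg)) - phi ((b - ereal mu) / ereal sg)) /
      (Phi ((b - ereal mu) / ereal sg) - Phi (ereal ((a - mu) / sg))) = tilted_mean 0"
    using mean_trunc_gauss by (simp add: tilted_mean_0 alpha_def beta_def normalizer_def)
  ultimately show ?thesis
    using differentially_private_rand_laplace_mech[OF assms(3) sens] by simp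
qed

end
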